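(* Let $G$ be an infinite group such that $[e]_g$ is a subgroup of $G$ for every $g\in G$. Then $G$ has infinitely many conjugacy classes.
   Context: $[x,y]=x^{-1}y^{-1}xy$; $[e]_g=\{[x,g]\mid x\in G\}$. *)

theory Defs
  imports "HOL-Algebra.Algebra"
begin

definition commutator :: "('a, 'b) monoid_scheme \<Rightarrow> 'a \<Rightarrow> 'a \<Rightarrow> 'a" where
  "commutator G x y = inv\<^bsub>G\<^esub> x \<otimes>\<^bsub>G\<^esub> inv\<^bsub>G\<^esub> y \<otimes>\<^bsub>G\<^esub> x \<otimes>\<^bsub>G\<^esub> y"

text \<open>[e]_g = { [x,g] | x in G }.\<close>
definition comm_set :: "('a, 'b) monoid_scheme \<Rightarrow> 'a \<Rightarrow> 'a set" where
  "comm_set G g = {commutator G x g | x. x \<in> carrier G}"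

definition conj_class :: "('a, 'b) monoid_scheme \<Rightarrow> 'a \<Rightarrow> 'a set" where
  "conj_class G g = {inv\<^bsub>G\<^esub> x \<otimes>\<^bsub>G\<^esub> g \<otimes>\<^bsub>G\<^esub> x | x. x \<in> carrier G}"

definition conj_classes :: "('a, 'b) monoid_scheme \<Rightarrow> 'a set set" where
  "conj_classes G = conj_class G ` carrier G"

end

theory Submission
  imports Defs
begin

text \<open>
  Suppose \<open>G\<close> had only finitely many conjugacy classes. The conjugacy class of \<open>g\<inverse>\<close> is the
  right coset \<open>[e]\<^sub>g g\<inverse>\<close>, and \<open>[e]\<^sub>g\<close>, being a subgroup, is normal, because conjugating a
  commutator \<open>[x,g]\<close> by \<open>y\<close> gives \<open>[xy,g] [y,g]\<inverse>\<close>. Now let \<open>N\<close> be an infinite normal subgroup.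
  It is a finite union of classes, so it contains an infinite class, that of some \<open>g\<inverse>\<close>. Then
  \<open>[e]\<^sub>g\<close> is an infinite normal subgroup of \<open>N\<close> which misses the class of \<open>g\<inverse>\<close>, hence contains
  fewer classes than \<open>N\<close>. Starting from \<open>N = G\<close>, this descent cannot go on forever.
\<close>

context group
begin

lemma mult_inv_cancel_left:
  "x \<in> carrier G \<Longrightarrow> z \<in> carrier G \<Longrightarrow> x \<otimes> (inv x \<otimes> z) = z"
  by (simp flip: m_assoc)

lemma commutator_mult_inv:
  assumes "x \<in> carrier G" "g \<in> carrier G"
  shows "commutator G x g \<otimes> inv g = inv x \<otimes> inv g \<otimes> x"
  using assms by (simp add: commutator_def m_assoc)

lemma commutator_conj:
  assumes "x \<in> carrier G" "y \<in> carrier G" "g \<in> carrier G"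
  shows "inv y \<otimes> commutator G x g \<otimes> y = commutator G (x \<otimes> y) g \<otimes> inv (commutator G y g)"
  using assms by (simp add: commutator_def inv_mult_group m_assoc mult_inv_cancel_left)

lemma commutator_in_comm_set [intro]:
  "x \<in> carrier G \<Longrightarrow> commutator G x g \<in> comm_set G g"
  by (auto simp: comm_set_def)

lemma conj_class_inv_eq_comm_set_image:
  assumes "g \<in> carrier G"
  shows "conj_class G (inv g) = (\<lambda>k. k \<otimes> inv g) ` comm_set G g"
proof (intro equalityI subsetI)
  fix c assume "c \<in> conj_class G (inv g)"
  then obtain x where "x \<in> carrier G" "c = inv x \<otimes> inv g \<otimes> x"
    by (auto simp: conj_class_def)
  then show "c \<in> (\<lambda>k. k \<otimes> inv g) ` comm_set G g"
    using assms by (auto simp flip: commutator_mult_inv)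
next
  fix c assume "c \<in> (\<lambda>k. k \<otimes> inv g) ` comm_set G g"
  then show "c \<in> conj_class G (inv g)"
    using assms by (auto simp: comm_set_def conj_class_def commutator_mult_inv)
qed

lemma comm_set_normal:
  assumes "g \<in> carrier G" "subgroup (comm_set G g) G"
  shows "comm_set G g \<lhd> G"
  unfolding normal_inv_iff
proof (intro conjI assms(2) ballI)
  fix y m assume y: "y \<in> carrier G" and "m \<in> comm_set G g"
  then obtain x where x: "x \<in> carrier G" "m = commutator G x g"
    by (auto simp: comm_set_def)
  have "y \<otimes> m \<otimes> inv y = commutator G (x \<otimes> inv y) g \<otimes> inv (commutator G (inv y) g)"
    using commutator_conj[of x "inv y" g] x y assms(1) by simp
  then show "y \<otimes> m \<otimes> inv y \<in> comm_set G g"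
    using x y assms by (auto intro: subgroup.m_closed subgroup.m_inv_closed)
qed

lemma comm_set_subset_normal:
  assumes "N \<lhd> G" "g \<in> N"
  shows "comm_set G g \<subseteq> N"
proof
  fix c assume "c \<in> comm_set G g"
  then obtain x where x: "x \<in> carrier G" "c = commutator G x g"
    by (auto simp: comm_set_def)
  interpret N: normal N G by fact
  have "inv x \<otimes> inv g \<otimes> x \<in> N"
    using x assms(2) by (simp add: N.inv_op_closed1)
  then have "inv x \<otimes> inv g \<otimes> x \<otimes> g \<in> N"
    using assms(2) by simp
  then show "c \<in> N"
    using x by (simp add: commutator_def)
qed

lemma conj_class_self_mem: "g \<in> carrier G \<Longrightarrow> g \<in> conj_class G g"
  unfolding conj_class_def by (rule CollectI, rule exI[of _ \<one>]) simp

lemma conj_class_subset_normal: "N \<lhd> G \<Longrightarrow> h \<in> N \<Longrightarrow> conj_class G h \<subseteq> N"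
  by (auto simp: conj_class_def normal.inv_op_closed1)

lemma one_mem_conj_class_imp_one:
  assumes "h \<in> carrier G" "\<one> \<in> conj_class G h"
  shows "h = \<one>"
proof -
  obtain x where x: "x \<in> carrier G" "\<one> = inv x \<otimes> h \<otimes> x"
    using assms(2) by (auto simp: conj_class_def)
  then have "x \<otimes> \<one> \<otimes> inv x = h"
    using assms(1) by (simp add: m_assoc mult_inv_cancel_left)
  with x(1) show "h = \<one>" by simp
qed

lemma infinite_conj_class_in_normal:
  assumes "finite (conj_classes G)" "N \<lhd> G" "infinite N"
  obtains h where "h \<in> N" "infinite (conj_class G h)"
proof -
  have sub: "N \<subseteq> carrier G"
    using assms(2) normal_imp_subgroup subgroup.subset by blast
  have "N \<subseteq> \<Union>(conj_class G ` N)"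
    using sub conj_class_self_mem by blast
  moreover have "finite (conj_class G ` N)"
    using finite_subset[OF image_mono[OF sub]] assms(1) unfolding conj_classes_def by blast
  ultimately have "\<exists>h\<in>N. infinite (conj_class G h)"
    using assms(3) finite_subset by blast
  with that show thesis by blast
qed

lemma infinite_normal_descent:
  assumes fin: "finite (conj_classes G)"
    and comm_subgroups: "\<forall>g \<in> carrier G. subgroup (comm_set G g) G"
    and N: "N \<lhd> G" "infinite N"
  obtains H where "H \<lhd> G" "infinite H"
    "{C \<in> conj_classes G. C \<subseteq> H} \<subset> {C \<in> conj_classes G. C \<subseteq> N}"
proof -
  obtain h where h: "h \<in> N" "infinite (conj_class G h)"
    using infinite_conj_class_in_normal[OF fin N] .
  have N_subgroup: "subgroup N G"
    using N(1) by (rule normal_imp_subgroup)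
  have h_carrier: "h \<in> carrier G"
    using N_subgroup h(1) by (rule subgroup.mem_carrier)
  define H where "H = comm_set G (inv h)"
  have H_normal: "H \<lhd> G"
    using comm_set_normal h_carrier comm_subgroups by (simp add: H_def)
  then have H_subgroup: "subgroup H G"
    by (rule normal_imp_subgroup)
  have class_eq: "conj_class G h = (\<lambda>k. k \<otimes> h) ` H"
    using conj_class_inv_eq_comm_set_image[of "inv h"] h_carrier by (simp add: H_def)
  then have "infinite H"
    using h(2) finite_imageI by metis
  have class_not_in_H: "\<not> conj_class G h \<subseteq> H"
  proof
    assume "conj_class G h \<subseteq> H"
    then have "inv h \<in> H"
      using conj_class_self_mem[OF h_carrier] subgroup.m_inv_closed[OF H_subgroup] by blast
    moreover have "inv h \<otimes> h = \<one>"
      using h_carrier by (rule l_inv)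
    ultimately have "\<one> \<in> conj_class G h"
      unfolding class_eq by force
    then have "h = \<one>"
      using one_mem_conj_class_imp_one h_carrier by blast
    then have "conj_class G h \<subseteq> {\<one>}"
      by (auto simp: conj_class_def)
    with h(2) show False
      using finite_subset by blast
  qed
  have class_in_N: "conj_class G h \<in> {C \<in> conj_classes G. C \<subseteq> N}"
    using h_carrier conj_class_subset_normal[OF N(1) h(1)] by (simp add: conj_classes_def)
  have "H \<subseteq> N"
    unfolding H_def
    using comm_set_subset_normal[OF N(1)] subgroup.m_inv_closed[OF N_subgroup h(1)] .
  then have "{C \<in> conj_classes G. C \<subseteq> H} \<subseteq> {C \<in> conj_classes G. C \<subseteq> N}"
    by blast
  then have "{C \<in> conj_classes G. C \<subseteq> H} \<subset> {C \<in> conj_classes G. C \<subseteq> N}"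
    using class_in_N class_not_in_H by blast
  from that[OF H_normal \<open>infinite H\<close> this] show thesis .
qed

lemma normal_finite_if_finite_conj_classes:
  assumes fin: "finite (conj_classes G)"
    and comm_subgroups: "\<forall>g \<in> carrier G. subgroup (comm_set G g) G"
    and "N \<lhd> G"
  shows "finite N"
  using assms(3)
proof (induction "card {C \<in> conj_classes G. C \<subseteq> N}" arbitrary: N rule: less_induct)
  case less
  show ?case
  proof (rule ccontr)
    assume "infinite N"
    then obtain H where H: "H \<lhd> G" "infinite H"
      "{C \<in> conj_classes G. C \<subseteq> H} \<subset> {C \<in> conj_classes G. C \<subseteq> N}"
      using infinite_normal_descent[OF fin comm_subgroups less.prems] by blast
    have "card {C \<in> conj_classes G. C \<subseteq> H} < card {C \<in> conj_classes G. C \<subseteq> N}"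
      using fin H(3) by (intro psubset_card_mono) auto
    with less.hyps H(1) have "finite H" by blast
    with H(2) show False by contradiction
  qed
qed

end

theorem mainTheorem7:
  fixes G :: "('a, 'b) monoid_scheme"
  assumes "group G"
    and "infinite (carrier G)"
    and "\<forall>g \<in> carrier G. subgroup (comm_set G g) G"
  shows "infinite (conj_classes G)"
proof
  assume "finite (conj_classes G)"
  interpret group G by fact
  have "finite (carrier G)"
    using normal_finite_if_finite_conj_classes \<open>finite (conj_classes G)\<close> assms(3) normal_self
    by blast
  with assms(2) show False by contradiction
qed

end
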